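(* The time evolution commutes with unbasketing: for every state $S=(S_i)_{i\in\mathbb Z}$ of the box-basket-ball system, choosing an index $i_0$ such that $S_i=V$ and $(T_\infty S)_i=V$ for all $i\le i_0$ and anchoring both unbasketings so that site $i_0$ is sent to cell $0$, one has $\mathrm{Unb}(T_\infty(S))=T_{BBS}(\mathrm{Unb}(S))$.
   Context: Box-basket-ball system (BBBS). A site state is a triple $(a,b,c)$ of nonnegative integers with $a=b-c+1$ (one box, $b$ baskets, $c$ balls; each box/basket holds at most one ball, balls placed in the box first). $V=(1,0,0)$. A state is a sequence $(S_i)_{i\in\mathbb Z}$ of site states with $S_i=V$ for all but finitely many $i$. The time evolution $T_\infty$: first every empty basket (there are $\min(a_i,b_i)$ at site $i$) is moved from site $i$ to site $i+1$, full baskets staying; then the balls are taken one at a time from left to right, and each is moved to the nearest currently unoccupied box or basket at a site strictly to its right (each ball moves exactly once). Box-ball system (BBS): a state is a $\{0,1\}$-valued sequence indexed by $\mathbb Z$ (cells; $1$ = ball) with finitely many $1$'s; its time evolution $T_{BBS}$ takes the balls one at a time from left to right and moves each to the nearest currently empty cell to its right. Unbasketing $\mathrm{Unb}$: each site $(a,b,c)$ is replaced by $b+1$ consecutive cells of the box-ball system, the first $c$ of which contain a ball; doing this for all sites in order gives a box-ball state (determined once one fixes which cell a given site starts at). *)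

theory Defs
  imports Main
begin

text \<open>A site state (a,b,c): a = number of unoccupied containers, b baskets, c balls.\<close>
type_synonym site = "nat \<times> nat \<times> nat"
type_synonym bbbs_state = "int \<Rightarrow> site"

definition s_a :: "site \<Rightarrow> nat" where "s_a s = fst s"
definition s_b :: "site \<Rightarrow> nat" where "s_b s = fst (snd s)"
definition s_c :: "site \<Rightarrow> nat" where "s_c s = snd (snd s)"

definition valid_site :: "site \<Rightarrow> bool" where
  "valid_site s \<longleftrightarrow> int (s_a s) = int (s_b s) - int (s_c s) + 1"

definition Vsite :: site where "Vsite = (1, 0, 0)"

definition is_bbbs_state :: "bbbs_state \<Rightarrow> bool" where
  "is_bbbs_state S \<longleftrightarrow> (\<forall>i. valid_site (S i)) \<and> finite {i. S i \<noteq> Vsite}"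

definition empty_baskets :: "site \<Rightarrow> nat" where
  "empty_baskets s = min (s_a s) (s_b s)"

text \<open>After moving empty baskets one site to the right: number of baskets at site i.\<close>
definition baskets_after :: "bbbs_state \<Rightarrow> int \<Rightarrow> nat" where
  "baskets_after S i = s_b (S i) - empty_baskets (S i) + empty_baskets (S (i - 1))"

text \<open>Capacity (box plus baskets) of site i after the basket move.\<close>
definition cap_after :: "bbbs_state \<Rightarrow> int \<Rightarrow> nat" where
  "cap_after S i = 1 + baskets_after S i"

text \<open>Move one ball from site p to the nearest site strictly to its right having an
  unoccupied box or basket; occ gives the current number of occupied containers.\<close>
definition bbbs_move :: "(int \<Rightarrow> nat) \<Rightarrow> (int \<Rightarrow> nat) \<Rightarrow> int \<Rightarrow> (int \<Rightarrow> nat)" where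
  "bbbs_move cap occ p =
     (let t = (LEAST t. p < t \<and> occ t < cap t) in occ(p := occ p - 1, t := occ t + 1))"

definition ball_list :: "bbbs_state \<Rightarrow> int list" where
  "ball_list S = concat (map (\<lambda>k. replicate (s_c (S k)) k)
                          (sorted_list_of_set {k. 0 < s_c (S k)}))"

definition T_inf :: "bbbs_state \<Rightarrow> bbbs_state" where
  "T_inf S =
    (let cap = cap_after S;
         occ = fold (\<lambda>p occ. bbbs_move cap occ p) (ball_list S) (\<lambda>i. s_c (S i))
     in (\<lambda>i. (cap i - occ i, cap i - 1, occ i)))"

type_synonym bbs_state = "int \<Rightarrow> bool"

definition bbs_move :: "int set \<Rightarrow> int \<Rightarrow> int set" where
  "bbs_move Occ p = (let t = (LEAST t. p < t \<and> t \<notin> Occ) in insert t (Occ - {p}))"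

definition T_BBS :: "bbs_state \<Rightarrow> bbs_state" where
  "T_BBS f = (\<lambda>n. n \<in> fold (\<lambda>p Occ. bbs_move Occ p) (sorted_list_of_set {n. f n}) {n. f n})"

text \<open>First cell of site i when site i0 is sent to cell 0; site j occupies b_j + 1 cells.\<close>
definition site_start :: "bbbs_state \<Rightarrow> int \<Rightarrow> int \<Rightarrow> int" where
  "site_start S i0 i =
     (if i0 \<le> i then (\<Sum>j\<in>{i0..<i}. int (s_b (S j)) + 1)
      else - (\<Sum>j\<in>{i..<i0}. int (s_b (S j)) + 1))"

definition Unb :: "bbbs_state \<Rightarrow> int \<Rightarrow> bbs_state" where
  "Unb S i0 = (\<lambda>n. \<exists>i. site_start S i0 i \<le> n \<and> n < site_start S i0 i + int (s_c (S i)))"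

end

theory Submission
  imports Defs
begin

text \<open>
  Both time evolutions move every ball exactly once, left to right, to the nearest free
  container strictly to its right.  We first analyse this process abstractly, for an arbitrary
  capacity function cap and initial ball counts c: processing the balls site by site, the final
  number of balls at site i is  min (carry i) (cap i - c i),  where the carry is the number of
  balls in transit past site i, satisfying
     carry (i+1) = (carry i - (cap i - c i)) + c i.
  The box-ball system is the special case of unit capacities (cells), so both sides of the
  theorem are described by a carry.  It then remains to compare the two carries: the cells of
  site i of the new state T_inf S consist of the cells vacated by the empty baskets arriving
  from site i-1, possibly one empty box cell, and then the cells of the old balls of site i.
  Tracking the cell carry across these runs of empty and full cells shows, by induction on i,
  that it agrees with the site carry at the left end of every site, and that the occupied cells
  of the new site are exactly its first new-ball-count cells.
\<close>

lemma int_Least_bounded: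
  fixes P :: "int \<Rightarrow> bool"
  assumes "P t0" and bounded: "\<And>t. P t \<Longrightarrow> p \<le> t"
  shows "P (LEAST t. P t)" and "\<And>t. P t \<Longrightarrow> (LEAST t. P t) \<le> t"
proof -
  define m where "m = (LEAST m::nat. P (p + int m))"
  have "P (p + int (nat (t0 - p)))" using assms by simp
  then have Pm: "P (p + int m)" unfolding m_def by (rule LeastI)
  have minimal: "p + int m \<le> t" if "P t" for t
  proof -
    have "P (p + int (nat (t - p)))" using that bounded[OF that] by simp
    then have "m \<le> nat (t - p)" unfolding m_def by (rule Least_le)
    then show ?thesis using bounded[OF that] by linarith
  qed
  have "(LEAST t. P t) = p + int m" by (rule Least_equality) (use Pm minimal in auto)
  then show "P (LEAST t. P t)" "\<And>t. P t \<Longrightarrow> (LEAST t. P t) \<le> t" using Pm minimal by auto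
qed

lemma int_ivl_snoc: "s \<le> i \<Longrightarrow> {s..<i+1} = insert i {s..<(i::int)}" by auto
lemma int_ivl_cons: "s < i \<Longrightarrow> {s..<i} = insert s {s+1..<(i::int)}" by auto

lemma int_mono_by_steps:
  fixes f :: "int \<Rightarrow> int"
  assumes step: "\<And>i. f i \<le> f (i+1)" and "i \<le> j"
  shows "f i \<le> f j"
  using \<open>i \<le> j\<close>
proof (induction j rule: int_ge_induct)
  case base then show ?case by simp
next
  case (step j) then show ?case using assms(1) order_trans by blast
qed

section \<open>Greedy filling of free slots\<close>

text \<open>Number of balls ending up at slot i when n balls are put, leftmost first, into slots
  s, s+1, ... offering room l places each.\<close>
definition greedy_fill :: "(int \<Rightarrow> nat) \<Rightarrow> int \<Rightarrow> nat \<Rightarrow> int \<Rightarrow> nat" where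
  "greedy_fill room s n i = (if s \<le> i then min (room i) (n - (\<Sum>l\<in>{s..<i}. room l)) else 0)"

lemma greedy_fill_none: "greedy_fill room s 0 i = 0"
  by (simp add: greedy_fill_def)

lemma greedy_fill_first: "greedy_fill room s n s = min (room s) n"
  by (simp add: greedy_fill_def)

lemma greedy_fill_le: "greedy_fill room s n i \<le> room i"
  by (simp add: greedy_fill_def)

lemma greedy_fill_skip:
  assumes "j < i"
  shows "greedy_fill room j n i = greedy_fill room (j+1) (n - room j) i"
proof -
  have "(\<Sum>l\<in>{j..<i}. room l) = room j + (\<Sum>l\<in>{j+1..<i}. room l)"
    using assms by (simp add: int_ivl_cons)
  then show ?thesis using assms unfolding greedy_fill_def by (simp add: diff_diff_left)
qed

lemma greedy_fill_full_prefix: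
  assumes "s \<le> t" and full: "\<And>i. s \<le> i \<Longrightarrow> i < t \<Longrightarrow> greedy_fill room s n i = room i"
  shows "(\<Sum>l\<in>{s..<t}. room l) \<le> n"
  using assms
proof (induction t rule: int_ge_induct)
  case base then show ?case by simp
next
  case (step i)
  have IH: "(\<Sum>l\<in>{s..<i}. room l) \<le> n" by (rule step.IH) (use step.prems in auto)
  have "greedy_fill room s n i = room i" using step.hyps step.prems by auto
  then have "room i \<le> n - (\<Sum>l\<in>{s..<i}. room l)" using step.hyps by (simp add: greedy_fill_def)
  then show ?case using IH step.hyps by (simp add: int_ivl_snoc)
qed

lemma greedy_fill_has_room:
  assumes "\<And>i. hi \<le> i \<Longrightarrow> 1 \<le> room i"
  shows "\<exists>t. s \<le> t \<and> greedy_fill room s n t < room t"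
proof -
  define m where "m = max s hi"
  define t where "t = m + int n + 1"
  have "n + 1 = (\<Sum>l\<in>{m..<t}. (1::nat))" by (simp add: t_def)
  also have "\<dots> \<le> (\<Sum>l\<in>{m..<t}. room l)"
    by (rule sum_mono) (use assms in \<open>auto simp: m_def\<close>)
  also have "\<dots> \<le> (\<Sum>l\<in>{s..<t}. room l)"
    by (rule sum_mono2) (auto simp: m_def)
  finally have "n < (\<Sum>l\<in>{s..<t}. room l)" by simp
  moreover have "1 \<le> room t" "s \<le> t" using assms by (auto simp: t_def m_def)
  ultimately show ?thesis unfolding greedy_fill_def by (intro exI[of _ t]) auto
qed

lemma greedy_fill_Suc:
  fixes room :: "int \<Rightarrow> nat" and s hi :: int and n :: nat
  assumes room: "\<And>i. hi \<le> i \<Longrightarrow> 1 \<le> room i"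
  defines "t \<equiv> LEAST t. s \<le> t \<and> greedy_fill room s n t < room t"
  shows "s \<le> t" and "greedy_fill room s n t < room t"
    and "greedy_fill room s (Suc n) = (greedy_fill room s n)(t := greedy_fill room s n t + 1)"
proof -
  obtain t0 where "s \<le> t0 \<and> greedy_fill room s n t0 < room t0"
    using greedy_fill_has_room[where hi = hi and room = room, OF room] by blast
  from int_Least_bounded[where P = "\<lambda>t. s \<le> t \<and> greedy_fill room s n t < room t" and p = s,
      OF this]
  have t: "s \<le> t" "greedy_fill room s n t < room t"
    and least: "\<And>i. s \<le> i \<Longrightarrow> greedy_fill room s n i < room i \<Longrightarrow> t \<le> i"
    unfolding t_def by auto
  show "s \<le> t" "greedy_fill room s n t < room t" using t by auto
  have full: "greedy_fill room s n i = room i" if "s \<le> i" "i < t" for i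
    using least[OF that(1)] that(2) greedy_fill_le[of room s n i] by fastforce
  have used: "(\<Sum>l\<in>{s..<t}. room l) \<le> n"
    using greedy_fill_full_prefix[OF t(1) full] by blast
  have rest: "n - (\<Sum>l\<in>{s..<t}. room l) < room t"
    using t by (simp add: greedy_fill_def min_def split: if_splits)
  show "greedy_fill room s (Suc n) = (greedy_fill room s n)(t := greedy_fill room s n t + 1)"
  proof
    fix i
    consider "i < s" | "s \<le> i" "i < t" | "i = t" | "t < i" by linarith
    then show "greedy_fill room s (Suc n) i = ((greedy_fill room s n)(t := greedy_fill room s n t + 1)) i"
    proof cases
      case 1 then show ?thesis using t by (auto simp: greedy_fill_def)
    next
      case 2
      from full[OF 2] have "room i \<le> n - (\<Sum>l\<in>{s..<i}. room l)"
        using 2 by (simp add: greedy_fill_def min_def split: if_splits)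
      then show ?thesis using 2 by (auto simp: greedy_fill_def)
    next
      case 3 then show ?thesis using t used rest by (auto simp: greedy_fill_def)
    next
      case 4
      have "room t + (\<Sum>l\<in>{s..<t}. room l) = (\<Sum>l\<in>{s..<t+1}. room l)"
        using t by (simp add: int_ivl_snoc)
      also have "\<dots> \<le> (\<Sum>l\<in>{s..<i}. room l)" by (rule sum_mono2) (use 4 in auto)
      finally have "Suc n \<le> (\<Sum>l\<in>{s..<i}. room l)" using used rest by linarith
      then show ?thesis using 4 t by (auto simp: greedy_fill_def)
    qed
  qed
qed

section \<open>Moving all balls once, from left to right\<close>

definition balls_of :: "(int \<Rightarrow> nat) \<Rightarrow> int list" where
  "balls_of c = concat (map (\<lambda>k. replicate (c k) k) (sorted_list_of_set {k. 0 < c k}))"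

definition move_all_balls :: "(int \<Rightarrow> nat) \<Rightarrow> (int \<Rightarrow> nat) \<Rightarrow> int \<Rightarrow> nat" where
  "move_all_balls cap c = fold (\<lambda>p occ. bbbs_move cap occ p) (balls_of c) c"

text \<open>The carry: number of balls in transit when the process reaches site lo + m, starting
  with none at site lo.\<close>
fun carry_from :: "(int \<Rightarrow> nat) \<Rightarrow> (int \<Rightarrow> nat) \<Rightarrow> int \<Rightarrow> nat \<Rightarrow> nat" where
  "carry_from cap c lo 0 = 0"
| "carry_from cap c lo (Suc m) =
     (carry_from cap c lo m - (cap (lo + int m) - c (lo + int m))) + c (lo + int m)"

definition carry :: "(int \<Rightarrow> nat) \<Rightarrow> (int \<Rightarrow> nat) \<Rightarrow> int \<Rightarrow> int \<Rightarrow> nat" where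
  "carry cap c lo i = carry_from cap c lo (nat (i - lo))"

lemma carry_below: "i \<le> lo \<Longrightarrow> carry cap c lo i = 0"
  by (simp add: carry_def)

text \<open>Arriving balls fill the free room of site i, the balls of site i join the transit.\<close>
lemma carry_step:
  assumes "lo \<le> i"
  shows "carry cap c lo (i+1) = (carry cap c lo i - (cap i - c i)) + c i"
proof -
  have "nat (i + 1 - lo) = Suc (nat (i - lo))" "lo + int (nat (i - lo)) = i" using assms by auto
  then show ?thesis by (simp add: carry_def)
qed

text \<open>If the sites right of j hold their own balls plus n greedily placed arrivals, moving r
  balls out of site j places them greedily after those n.\<close>
lemma bbbs_move_iterate:
  fixes cap c :: "int \<Rightarrow> nat"
  assumes cap1: "\<And>i. 1 \<le> cap i" and le: "\<And>i. c i \<le> cap i" and hi: "\<And>i. hi \<le> i \<Longrightarrow> c i = 0"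
    and occ: "\<And>i. j < i \<Longrightarrow> occ i = c i + greedy_fill (\<lambda>i. cap i - c i) (j+1) n i"
  shows "((\<lambda>occ. bbbs_move cap occ j) ^^ r) occ
     = (\<lambda>i. if i = j then occ j - r
            else if j < i then c i + greedy_fill (\<lambda>i. cap i - c i) (j+1) (n + r) i else occ i)"
proof (induction r)
  case 0 then show ?case using occ by auto
next
  case (Suc r)
  define room where "room = (\<lambda>i. cap i - c i)"
  define oc where "oc = (\<lambda>i. if i = j then occ j - r
     else if j < i then c i + greedy_fill room (j+1) (n + r) i else occ i)"
  have room_hi: "\<And>i. hi \<le> i \<Longrightarrow> 1 \<le> room i" using hi cap1 by (simp add: room_def)
  define t where "t = (LEAST t. j+1 \<le> t \<and> greedy_fill room (j+1) (n+r) t < room t)"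
  note fill = greedy_fill_Suc[where hi = hi and room = room and s = "j+1" and n = "n+r",
      OF room_hi, folded t_def]
  have free: "(\<lambda>t. j < t \<and> oc t < cap t) = (\<lambda>t. j+1 \<le> t \<and> greedy_fill room (j+1) (n+r) t < room t)"
    using le by (fastforce simp: oc_def room_def fun_eq_iff)
  have "((\<lambda>occ. bbbs_move cap occ j) ^^ Suc r) occ = bbbs_move cap oc j"
    using Suc unfolding oc_def room_def by simp
  also have "\<dots> = oc(j := oc j - 1, t := oc t + 1)"
    unfolding bbbs_move_def free t_def by (simp add: Let_def)
  finally show ?case using fill by (auto simp: oc_def room_def[symmetric] fun_eq_iff)
qed

lemma fold_bbbs_move_prefix:
  fixes cap c :: "int \<Rightarrow> nat"
  assumes cap1: "\<And>i. 1 \<le> cap i" and le: "\<And>i. c i \<le> cap i"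
    and below: "\<And>i. i < lo \<Longrightarrow> c i = 0" and hi: "\<And>i. hi \<le> i \<Longrightarrow> c i = 0"
  shows "fold (\<lambda>p occ. bbbs_move cap occ p)
            (concat (map (\<lambda>m. replicate (c (lo + int m)) (lo + int m)) [0..<m])) c
       = (\<lambda>i. if i < lo + int m then min (carry cap c lo i) (cap i - c i)
              else c i + greedy_fill (\<lambda>i. cap i - c i) (lo + int m) (carry cap c lo (lo + int m)) i)"
proof (induction m)
  case 0 then show ?case by (auto simp: carry_below below greedy_fill_none)
next
  case (Suc m)
  define j where "j = lo + int m"
  define K where "K = carry cap c lo j"
  define oc where "oc = (\<lambda>i. if i < j then min (carry cap c lo i) (cap i - c i)
                            else c i + greedy_fill (\<lambda>i. cap i - c i) j K i)"
  have occ: "\<And>i. j < i \<Longrightarrow> oc i = c i + greedy_fill (\<lambda>i. cap i - c i) (j+1) (K - (cap j - c j)) i"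
    by (simp add: oc_def greedy_fill_skip)
  have "fold (\<lambda>p occ. bbbs_move cap occ p)
          (concat (map (\<lambda>m. replicate (c (lo + int m)) (lo + int m)) [0..<Suc m])) c
      = ((\<lambda>occ. bbbs_move cap occ j) ^^ c j) oc"
    using Suc unfolding oc_def j_def K_def by simp
  also have "\<dots> = (\<lambda>i. if i = j then oc j - c j
     else if j < i then c i + greedy_fill (\<lambda>i. cap i - c i) (j+1) (K - (cap j - c j) + c j) i else oc i)"
    using bbbs_move_iterate[where cap = cap and c = c and hi = hi and j = j and occ = oc
        and n = "K - (cap j - c j)" and r = "c j", OF cap1 le hi] occ
    by simp
  also have "\<dots> = (\<lambda>i. if i < lo + int (Suc m) then min (carry cap c lo i) (cap i - c i)
     else c i + greedy_fill (\<lambda>i. cap i - c i) (lo + int (Suc m)) (carry cap c lo (lo + int (Suc m))) i)"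
  proof -
    have jS: "lo + int (Suc m) = j + 1" by (simp add: j_def)
    have carry_next: "carry cap c lo (j+1) = K - (cap j - c j) + c j"
      using carry_step[of lo j cap c] by (simp add: K_def j_def)
    have at_j: "oc j - c j = min (carry cap c lo j) (cap j - c j)"
      by (simp add: oc_def K_def greedy_fill_first min.commute)
    have left: "oc i = min (carry cap c lo i) (cap i - c i)" if "i < j" for i
      using that by (simp add: oc_def)
    show ?thesis unfolding jS by (rule ext) (simp add: at_j left carry_next)
  qed
  finally show ?case .
qed

theorem move_all_balls_closed_form:
  fixes cap c :: "int \<Rightarrow> nat"
  assumes cap1: "\<And>i. 1 \<le> cap i" and le: "\<And>i. c i \<le> cap i"
    and below: "\<And>i. i < lo \<Longrightarrow> c i = 0" and fin: "finite {k. 0 < c k}"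
  shows "move_all_balls cap c i = min (carry cap c lo i) (cap i - c i)"
proof -
  obtain M where M: "\<And>k. 0 < c k \<Longrightarrow> k \<le> M"
    using bdd_above_finite[OF fin] by (auto simp: bdd_above_def)
  have hi: "\<And>k. M + 1 \<le> k \<Longrightarrow> c k = 0" using M by force
  define N where "N = nat (max (M + 1 - lo) (i - lo + 1))"
  define xs where "xs = map (\<lambda>m. lo + int m) [0..<N]"
  have support: "{k. 0 < c k} \<subseteq> set xs"
  proof
    fix k assume "k \<in> {k. 0 < c k}"
    then have "lo \<le> k" "k \<le> M" using below M by (auto simp: not_less[symmetric])
    then have "k = lo + int (nat (k - lo))" "nat (k - lo) < N" by (auto simp: N_def)
    then show "k \<in> set xs" unfolding xs_def by (metis atLeastLessThan_iff image_eqI le0 set_map set_upt)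
  qed
  have "sorted_list_of_set {k. 0 < c k} = filter (\<lambda>k. 0 < c k) xs"
  proof (rule sorted_distinct_set_unique)
    show "set (sorted_list_of_set {k. 0 < c k}) = set (filter (\<lambda>k. 0 < c k) xs)"
      using fin support by auto
    have "sorted xs" "distinct xs" by (simp_all add: xs_def sorted_iff_nth_mono distinct_map inj_on_def)
    then show "sorted (filter (\<lambda>k. 0 < c k) xs)" "distinct (filter (\<lambda>k. 0 < c k) xs)"
      by (simp_all add: sorted_wrt_filter)
  qed (use fin in auto)
  moreover have "concat (map (\<lambda>k. replicate (c k) k) (filter (\<lambda>k. 0 < c k) ys))
      = concat (map (\<lambda>k. replicate (c k) k) ys)" for ys
    by (induction ys) auto
  ultimately have "balls_of c = concat (map (\<lambda>m. replicate (c (lo + int m)) (lo + int m)) [0..<N])"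
    unfolding balls_of_def xs_def by (simp add: comp_def)
  moreover have "i - lo + 1 \<le> int N" unfolding N_def by simp linarith
  then have "i < lo + int N" by linarith
  ultimately show ?thesis
    using fold_bbbs_move_prefix[where cap = cap and c = c and lo = lo and hi = "M + 1" and m = N,
        OF cap1 le below hi]
    by (simp add: move_all_balls_def)
qed

section \<open>The box-ball system as the unit-capacity case\<close>

definition indic :: "int set \<Rightarrow> int \<Rightarrow> nat" where
  "indic A n = (if n \<in> A then 1 else 0)"

lemma bbs_move_as_bbbs_move:
  assumes "finite A"
  shows "indic (bbs_move A p) = bbbs_move (\<lambda>_. 1) (indic A) p" and "finite (bbs_move A p)"
proof -
  define t where "t = (LEAST t. p < t \<and> t \<notin> A)"
  have "p < Max (insert p A) + 1 \<and> Max (insert p A) + 1 \<notin> A"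
    using assms by (auto dest: Max_ge[of "insert p A", simplified])
  from int_Least_bounded(1)[where P = "\<lambda>t. p < t \<and> t \<notin> A" and p = p, OF this]
  have t: "p < t" "t \<notin> A" unfolding t_def by auto
  have free: "(\<lambda>t. p < t \<and> indic A t < 1) = (\<lambda>t. p < t \<and> t \<notin> A)"
    by (auto simp: indic_def)
  have "bbbs_move (\<lambda>_. 1) (indic A) p = (indic A)(p := indic A p - 1, t := indic A t + 1)"
    unfolding bbbs_move_def free t_def by (simp add: Let_def)
  moreover have "bbs_move A p = insert t (A - {p})"
    unfolding bbs_move_def t_def by (simp add: Let_def)
  ultimately show "indic (bbs_move A p) = bbbs_move (\<lambda>_. 1) (indic A) p" "finite (bbs_move A p)"
    using t assms by (auto simp: indic_def fun_eq_iff)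
qed

lemma fold_bbs_move_as_bbbs_move:
  "finite A \<Longrightarrow> indic (fold (\<lambda>p Occ. bbs_move Occ p) xs A)
     = fold (\<lambda>p occ. bbbs_move (\<lambda>_. 1) occ p) xs (indic A)"
proof (induction xs arbitrary: A)
  case Nil then show ?case by simp
next
  case (Cons x xs) then show ?case using bbs_move_as_bbbs_move[OF Cons.prems, of x] by simp
qed

lemma balls_of_indic:
  assumes "finite A"
  shows "balls_of (indic A) = sorted_list_of_set A"
proof -
  have "set xs \<subseteq> A \<Longrightarrow> concat (map (\<lambda>k. replicate (indic A k) k) xs) = xs" for xs
    by (induction xs) (auto simp: indic_def)
  moreover have "{k. 0 < indic A k} = A" by (auto simp: indic_def)
  ultimately show ?thesis using assms by (simp add: balls_of_def)
qed

lemma T_BBS_as_move_all_balls: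
  assumes "finite {n. f n}"
  shows "T_BBS f n \<longleftrightarrow> move_all_balls (\<lambda>_. 1) (indic {n. f n}) n = 1"
proof -
  have "T_BBS f n \<longleftrightarrow>
      indic (fold (\<lambda>p Occ. bbs_move Occ p) (sorted_list_of_set {n. f n}) {n. f n}) n = 1"
    by (simp add: T_BBS_def indic_def)
  then show ?thesis
    by (simp add: fold_bbs_move_as_bbbs_move[OF assms] move_all_balls_def balls_of_indic[OF assms])
qed

text \<open>With unit capacities, every empty cell absorbs one ball in transit and every full cell
  sends one more ball on its way.\<close>
lemma carry_unit_empty_run:
  assumes "lo \<le> u" and "\<And>k. k < x \<Longrightarrow> c (u + int k) = 0"
  shows "carry (\<lambda>_. 1) c lo (u + int x) = carry (\<lambda>_. 1) c lo u - x"
  using assms(2)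
proof (induction x)
  case 0 then show ?case by simp
next
  case (Suc x)
  have "carry (\<lambda>_. 1) c lo (u + int (Suc x)) = carry (\<lambda>_. 1) c lo (u + int x + 1)"
    by (simp add: ac_simps)
  also have "\<dots> = carry (\<lambda>_. 1) c lo u - Suc x"
    using Suc carry_step[of lo "u + int x" "\<lambda>_. 1" c] assms(1) by simp
  finally show ?case .
qed

lemma carry_unit_full_run:
  assumes "lo \<le> u" and "\<And>k. k < x \<Longrightarrow> c (u + int k) = 1"
  shows "carry (\<lambda>_. 1) c lo (u + int x) = carry (\<lambda>_. 1) c lo u + x"
  using assms(2)
proof (induction x)
  case 0 then show ?case by simp
next
  case (Suc x)
  have "carry (\<lambda>_. 1) c lo (u + int (Suc x)) = carry (\<lambda>_. 1) c lo (u + int x + 1)"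
    by (simp add: ac_simps)
  also have "\<dots> = carry (\<lambda>_. 1) c lo u + Suc x"
    using Suc carry_step[of lo "u + int x" "\<lambda>_. 1" c] assms(1) by simp
  finally show ?case .
qed

lemma min_unit_room_eq_one: "min (k::nat) (1 - b) = 1 \<longleftrightarrow> 0 < k \<and> b = 0"
  by (cases b) (auto simp: min_def)

section \<open>Cells of a site under unbasketing\<close>

lemma site_start_anchor: "site_start S i0 i0 = 0"
  by (simp add: site_start_def)

lemma site_start_Suc: "site_start S i0 (i+1) = site_start S i0 i + int (s_b (S i)) + 1"
proof (cases "i0 \<le> i")
  case True then show ?thesis by (simp add: site_start_def int_ivl_snoc)
next
  case False
  then have "{i..<i0} = insert i {i+1..<i0}" by auto
  with False show ?thesis by (cases "i + 1 = i0") (simp_all add: site_start_def)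
qed

lemma site_start_mono: "i \<le> j \<Longrightarrow> site_start S i0 i \<le> site_start S i0 j"
  by (rule int_mono_by_steps) (simp_all add: site_start_Suc)

lemma site_start_locate: "\<exists>i. site_start S i0 i \<le> n \<and> n < site_start S i0 (i+1)"
proof (induction n rule: int_induct[where k = 0])
  case base
  show ?case using site_start_Suc[of S i0 i0] by (intro exI[of _ i0]) (simp add: site_start_anchor)
next
  case (step1 n)
  then obtain i where i: "site_start S i0 i \<le> n" "n < site_start S i0 (i+1)" by blast
  show ?case
  proof (cases "n + 1 < site_start S i0 (i+1)")
    case True then show ?thesis using i by (intro exI[of _ i]) auto
  next
    case False then show ?thesis using i site_start_Suc[of S i0 "i+1"]
      by (intro exI[of _ "i+1"]) simp
  qed
next
  case (step2 n)
  then obtain i where i: "site_start S i0 i \<le> n" "n < site_start S i0 (i+1)" by blast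
  show ?case
  proof (cases "site_start S i0 i \<le> n - 1")
    case True then show ?thesis using i by (intro exI[of _ i]) auto
  next
    case False then show ?thesis using i site_start_Suc[of S i0 "i-1"]
      by (intro exI[of _ "i-1"]) simp
  qed
qed

lemma Unb_within_site:
  assumes fits: "\<And>j. s_c (S j) \<le> s_b (S j) + 1"
    and cell: "site_start S i0 i \<le> n" "n < site_start S i0 (i+1)"
  shows "Unb S i0 n \<longleftrightarrow> n < site_start S i0 i + int (s_c (S i))"
proof
  assume "Unb S i0 n"
  then obtain j where j: "site_start S i0 j \<le> n" "n < site_start S i0 j + int (s_c (S j))"
    by (auto simp: Unb_def)
  consider "j < i" | "j = i" | "i < j" by linarith
  then show "n < site_start S i0 i + int (s_c (S i))"
  proof cases
    case 1
    then have "site_start S i0 (j+1) \<le> site_start S i0 i" by (intro site_start_mono) simp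
    then show ?thesis using j cell site_start_Suc[of S i0 j] fits[of j] by linarith
  next
    case 3
    then have "site_start S i0 (i+1) \<le> site_start S i0 j" by (intro site_start_mono) simp
    then show ?thesis using j cell by linarith
  qed (use j in simp)
qed (use cell in \<open>auto simp: Unb_def\<close>)

section \<open>Comparing the two carries\<close>

text \<open>Inside the locale,
  balls and eB are the ball and empty-basket counts of the sites, new_balls and KS the ball
  counts and the carry of the time evolution, and cells and KC the corresponding data of the
  unbasketed box-ball state U, with cell 0 the first cell of site i0.\<close>
locale anchored_bbbs =
  fixes S :: bbbs_state and i0 :: int
  assumes state: "is_bbbs_state S" and vacuum: "\<And>i. i \<le> i0 \<Longrightarrow> S i = Vsite"
begin

abbreviation balls :: "int \<Rightarrow> nat" where "balls \<equiv> \<lambda>i. s_c (S i)"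
abbreviation eB :: "int \<Rightarrow> nat" where "eB \<equiv> \<lambda>i. empty_baskets (S i)"

lemma site_valid: "int (s_a (S i)) = int (s_b (S i)) - int (balls i) + 1"
  using state by (simp add: is_bbbs_state_def valid_site_def)

lemma balls_fit: "balls i \<le> s_b (S i) + 1"
  using site_valid[of i] by linarith

lemma empty_baskets_fit: "eB i + balls i \<le> s_b (S i) + 1" "eB i \<le> s_b (S i)"
  using site_valid[of i] by (auto simp: empty_baskets_def min_def)

text \<open>The box and the full baskets stay: they hold all balls of a nonempty site.\<close>
lemma staying_containers: "1 + (s_b (S i) - eB i) = (if balls i = 0 then 1 else balls i)"
  using site_valid[of i] by (auto simp: empty_baskets_def min_def)

lemma vacuum_site: "i \<le> i0 \<Longrightarrow> balls i = 0 \<and> s_b (S i) = 0 \<and> eB i = 0"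
  using vacuum by (auto simp: Vsite_def s_c_def s_b_def s_a_def empty_baskets_def)

lemma finite_balls: "finite {i. 0 < balls i}"
  by (rule finite_subset[of _ "{i. S i \<noteq> Vsite}"])
     (use state in \<open>auto simp: is_bbbs_state_def Vsite_def s_c_def\<close>)

text \<open>After the basket move, site i holds its staying containers and the empty baskets of
  site i-1.\<close>
lemma cap_after_eq: "cap_after S i = (if balls i = 0 then 1 else balls i) + eB (i-1)"
  using staying_containers[of i] by (simp add: cap_after_def baskets_after_def)

lemma cap_after_int: "int (cap_after S i) = 1 + int (s_b (S i)) - int (eB i) + int (eB (i-1))"
  using empty_baskets_fit(2)[of i] by (simp add: cap_after_def baskets_after_def)

lemma balls_le_cap: "1 \<le> cap_after S i" "balls i \<le> cap_after S i"
  using cap_after_eq[of i] by auto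

abbreviation new_balls :: "int \<Rightarrow> nat" where "new_balls \<equiv> move_all_balls (cap_after S) balls"
abbreviation KS :: "int \<Rightarrow> nat" where "KS \<equiv> carry (cap_after S) balls i0"

lemma T_inf_eq: "T_inf S i = (cap_after S i - new_balls i, cap_after S i - 1, new_balls i)"
  by (simp add: T_inf_def move_all_balls_def balls_of_def ball_list_def Let_def)

lemma new_balls_eq: "new_balls i = min (KS i) (cap_after S i - balls i)"
  by (rule move_all_balls_closed_form) (use balls_le_cap vacuum_site finite_balls in auto)

lemma new_balls_le: "new_balls i \<le> cap_after S i"
  using new_balls_eq[of i] balls_le_cap[of i] by simp

abbreviation st :: "int \<Rightarrow> int" where "st \<equiv> site_start S i0"
abbreviation st' :: "int \<Rightarrow> int" where "st' \<equiv> site_start (T_inf S) i0"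
abbreviation U :: bbs_state where "U \<equiv> Unb S i0"
abbreviation cells :: "int \<Rightarrow> nat" where "cells \<equiv> indic {n. U n}"
abbreviation KC :: "int \<Rightarrow> nat" where "KC \<equiv> carry (\<lambda>_. 1) cells 0"

lemma st'_Suc: "st' (i+1) = st' i + int (cap_after S i)"
  using site_start_Suc[of "T_inf S" i0 i] balls_le_cap(1)[of i] by (simp add: T_inf_eq s_b_def)

lemma U_within_site: "st i \<le> n \<Longrightarrow> n < st (i+1) \<Longrightarrow> U n \<longleftrightarrow> n < st i + int (balls i)"
  by (rule Unb_within_site) (use balls_fit in auto)

lemma Unb_T_inf_within_site:
  assumes "st' i \<le> n" "n < st' (i+1)"
  shows "Unb (T_inf S) i0 n \<longleftrightarrow> n < st' i + int (new_balls i)"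
proof -
  have "s_c (T_inf S j) \<le> s_b (T_inf S j) + 1" for j
    using new_balls_le[of j] by (simp add: T_inf_eq s_b_def s_c_def)
  from Unb_within_site[of "T_inf S", OF this assms] show ?thesis by (simp add: T_inf_eq s_c_def)
qed

lemma finite_U: "finite {n. U n}"
proof (rule finite_subset)
  show "{n. U n} \<subseteq> (\<Union>i\<in>{i. 0 < balls i}. {st i..<st i + int (balls i)})"
  proof
    fix n assume "n \<in> {n. U n}"
    then obtain i where i: "st i \<le> n" "n < st i + int (balls i)" by (auto simp: Unb_def)
    then have "0 < balls i" by linarith
    then show "n \<in> (\<Union>i\<in>{i. 0 < balls i}. {st i..<st i + int (balls i)})"
      by (intro UN_I[of i]) (use i in simp_all)
  qed
  show "finite (\<Union>i\<in>{i. 0 < balls i}. {st i..<st i + int (balls i)})"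
    by (rule finite_UN_I) (use finite_balls in simp_all)
qed

lemma U_nonneg: "U n \<Longrightarrow> 0 \<le> n"
proof -
  assume "U n"
  then obtain j where j: "st j \<le> n" "n < st j + int (balls j)" by (auto simp: Unb_def)
  have "i0 \<le> j"
  proof (rule ccontr)
    assume "\<not> i0 \<le> j"
    then have "balls j = 0" using vacuum_site[of j] by simp
    then show False using j by simp
  qed
  then show "0 \<le> n" using site_start_mono[of i0 j S i0] site_start_anchor[of S i0] j(1) by linarith
qed

lemma T_BBS_U: "T_BBS U n \<longleftrightarrow> 0 < KC n \<and> cells n = 0"
proof -
  have below: "cells i = 0" if "i < 0" for i
    using U_nonneg[of i] that by (auto simp: indic_def)
  have support: "finite {k. 0 < cells k}"
    using finite_U by (simp add: indic_def)
  have closed: "move_all_balls (\<lambda>_. 1) cells n = min (KC n) (1 - cells n)"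
    by (rule move_all_balls_closed_form) (use below support in \<open>auto simp: indic_def\<close>)
  have "T_BBS U n \<longleftrightarrow> move_all_balls (\<lambda>_. 1) cells n = 1"
    by (rule T_BBS_as_move_all_balls[OF finite_U])
  also have "\<dots> \<longleftrightarrow> min (KC n) (1 - cells n) = 1" by (simp only: closed)
  also have "\<dots> \<longleftrightarrow> 0 < KC n \<and> cells n = 0" by (rule min_unit_room_eq_one)
  finally show ?thesis .
qed

text \<open>The cells of the new site i: first the free room of site i, i.e. the cells vacated by the
  empty baskets from site i-1 (and the box if site i had no ball), then the old balls of site i.\<close>
lemma free_room_cells:
  assumes start: "st' i = st i - int (eB (i-1))" and k: "k < cap_after S i - balls i"
  shows "cells (st' i + int k) = 0"
proof (cases "k < eB (i-1)")
  case True
  have "st i = st (i-1) + int (s_b (S (i-1))) + 1" using site_start_Suc[of S i0 "i-1"] by simp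
  then have "\<not> U (st' i + int k)"
    using U_within_site[of "i-1" "st' i + int k"] empty_baskets_fit(1)[of "i-1"] start True by simp
  then show ?thesis by (simp add: indic_def)
next
  case False
  then have "k = eB (i-1)" "balls i = 0" using k cap_after_eq[of i] by (auto split: if_splits)
  then have "\<not> U (st i)" using U_within_site[of i "st i"] site_start_Suc[of S i0 i] by simp
  then show ?thesis using start \<open>k = eB (i-1)\<close> by (simp add: indic_def)
qed

lemma old_ball_cells:
  assumes start: "st' i = st i - int (eB (i-1))" and k: "k < balls i"
  shows "cells (st' i + int (cap_after S i - balls i) + int k) = 1"
proof -
  have "cap_after S i - balls i = eB (i-1)" using cap_after_eq[of i] k by simp
  then have cell: "st' i + int (cap_after S i - balls i) + int k = st i + int k" using start by simp
  have "st i + int k < st (i+1)" using site_start_Suc[of S i0 i] balls_fit[of i] k by simp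
  then have "U (st i + int k)" using U_within_site[of i "st i + int k"] k by simp
  then show ?thesis unfolding cell by (simp add: indic_def)
qed

lemma site_cells_step:
  assumes i: "i0 \<le> i" and start: "st' i = st i - int (eB (i-1))"
    and K: "KC (st' i) = KS i" and nonneg: "0 \<le> st' i"
  shows "KC (st' i + int (cap_after S i)) = KS (i+1)"
    and "k < cap_after S i \<Longrightarrow> T_BBS U (st' i + int k) \<longleftrightarrow> k < new_balls i"
proof -
  define room where "room = cap_after S i - balls i"
  have cap: "cap_after S i = room + balls i" using balls_le_cap(2)[of i] by (simp add: room_def)
  have free: "\<And>k. k < room \<Longrightarrow> cells (st' i + int k) = 0"
    using free_room_cells[OF start] by (simp add: room_def)
  have full: "\<And>k. k < balls i \<Longrightarrow> cells (st' i + int room + int k) = 1"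
    using old_ball_cells[OF start] by (simp add: room_def)
  have carry_free: "KC (st' i + int k) = KS i - k" if "k \<le> room" for k
    using carry_unit_empty_run[OF nonneg, of k] free that K by simp
  have "KC (st' i + int (cap_after S i)) = KC (st' i + int room) + balls i"
    using carry_unit_full_run[of 0 "st' i + int room" "balls i" cells] full nonneg
    by (simp add: cap add.assoc)
  also have "\<dots> = KS (i+1)"
    using carry_free[of room] carry_step[OF i, of "cap_after S" balls] by (simp add: room_def)
  finally show "KC (st' i + int (cap_after S i)) = KS (i+1)" .
  assume k: "k < cap_after S i"
  have new: "new_balls i = min (KS i) room" by (simp add: new_balls_eq room_def)
  show "T_BBS U (st' i + int k) \<longleftrightarrow> k < new_balls i"
  proof (cases "k < room")
    case True then show ?thesis using free carry_free new by (simp add: T_BBS_U)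
  next
    case False
    then have "cells (st' i + int k) = 1"
      using full[of "k - room"] k cap by simp
    then show ?thesis using False new by (simp add: T_BBS_U)
  qed
qed

lemma site_alignment:
  "i0 \<le> i \<Longrightarrow> st' i = st i - int (eB (i-1)) \<and> KC (st' i) = KS i \<and> 0 \<le> st' i"
proof (induction i rule: int_ge_induct)
  case base
  show ?case using vacuum_site[of "i0 - 1"] site_start_anchor[of S i0] site_start_anchor[of "T_inf S" i0]
    by (simp add: carry_below)
next
  case (step i)
  then have IH: "st' i = st i - int (eB (i-1))" "KC (st' i) = KS i" "0 \<le> st' i" by auto
  show ?case using site_cells_step(1)[OF step.hyps IH] IH st'_Suc[of i]
      site_start_Suc[of S i0 i] cap_after_int[of i] by simp
qed

lemma Unb_T_inf: "Unb (T_inf S) i0 n \<longleftrightarrow> T_BBS U n"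
proof -
  obtain i where i: "st' i \<le> n" "n < st' (i+1)" using site_start_locate by blast
  show ?thesis
  proof (cases "i0 \<le> i")
    case True
    define k where "k = nat (n - st' i)"
    have n: "n = st' i + int k" and "k < cap_after S i" using i st'_Suc[of i] by (auto simp: k_def)
    then show ?thesis using Unb_T_inf_within_site[OF i] site_alignment[OF True]
        site_cells_step(2)[OF True, of k] by auto
  next
    case False
    then have "st' (i+1) \<le> st' i0" by (intro site_start_mono) simp
    then have "n \<le> 0" using i site_start_anchor[of "T_inf S" i0] by linarith
    then have "\<not> T_BBS U n" by (simp add: T_BBS_U carry_below)
    moreover have "new_balls i = 0" using False by (simp add: new_balls_eq carry_below)
    ultimately show ?thesis using Unb_T_inf_within_site[OF i] i(1) by simp
  qed
qed

end

theorem mainTheorem4: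
  fixes S :: bbbs_state and i0 :: int
  assumes "is_bbbs_state S"
    and "\<forall>i\<le>i0. S i = Vsite \<and> T_inf S i = Vsite"
  shows "Unb (T_inf S) i0 = T_BBS (Unb S i0)"
proof -
  interpret anchored_bbbs S i0 using assms by unfold_locales auto
  show ?thesis using Unb_T_inf by (intro ext)
qed

end
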